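(* Under the setup below, for every $\mathbf{v}\in\mathbb{R}^E$, letting $\mathbf{d}=\mathbf{B}^\top\mathbf{W}^{1/2}\mathbf{v}$, $\mathbf{z}=\widetilde{\mathbf{\Gamma}}\mathbf{\Pi}^{(\eta-1)}\cdots\mathbf{\Pi}^{(0)}\mathbf{d}$ and $\widetilde{\mathbf{f}}=\sum_{H\in\mathcal{T}}\mathbf{M}^{(H)}\mathbf{z}|_{F_H}$, we have $\mathbf{B}^\top\mathbf{W}^{1/2}\widetilde{\mathbf{f}}=\mathbf{B}^\top\mathbf{W}^{1/2}\mathbf{v}$.
   Context: Setup. $G=(V,E)$ is a connected undirected graph with $|V|=n$, positive edge weights, $\mathbf{W}=\mathrm{diag}(\mathbf{w})$, signed incidence matrix $\mathbf{B}\in\mathbb{R}^{E\times V}$; for a region (edge-induced subgraph) $H$, $\mathbf{B}[H]$ is $\mathbf{B}$ with rows of edges not in $E(H)$ set to zero. All matrices/vectors are padded with zeros to $V$- or $E$-indexed dimensions; $\mathbf{x}|_S$ is $\mathbf{x}$ on $S$ and zero elsewhere; $\mathbf{I}$ is the $n\times n$ identity; $\mathbf{M}_{S,T}$ is the submatrix with rows $S$, columns $T$; $\mathbf{M}^{-1}$ is the Moore–Penrose pseudoinverse. $\mathcal{T}$ is a separator tree of $G$: a rooted binary tree of regions $H$ with vertex sets $\partial H$, $S(H)$, $F_H$, where the root is $G$ with $\partial G=\emptyset$, $F_G=S(G)$; a non-leaf node $H$ has two children $D_1,D_2$ whose edge sets partition $E(H)$ (no isolated vertices) with $V(D_1)\cap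 V(D_2)=S(H)$, $\partial D_j=(\partial H\cup S(H))\cap V(D_j)$, $F_H=S(H)\setminus\partial H$; a leaf has constantly many edges, $S(H)=\emptyset$, $F_H=V(H)\setminus\partial H$. The level $\eta(H)$ is the maximum number of edges on a tree path from $H$ down to a descendant (leaves 0); $\eta$ is the height; $\mathcal{T}(i)$ is the set of level-$i$ nodes; $\{F_H\}$ partitions $V$. Recursive Laplacians. For a leaf $H$, $\mathbf{L}^{(H)}=\mathbf{B}[H]^\top\mathbf{W}\mathbf{B}[H]$. For each node $D$ we are given a Laplacian $\widetilde{\mathrm{SC}}(\mathbf{L}^{(D)},\partial D)$ supported on $\partial D$; for a non-leaf $H$ with children $D_1,D_2$, $\mathbf{L}^{(H)}=\widetilde{\mathrm{SC}}(\mathbf{L}^{(D_1)},\partial D_1)+\widetilde{\mathrm{SC}}(\mathbf{L}^{(D_2)},\partial D_2)$. Assume each $\mathbf{L}^{(H)}$ is the Laplacian of a connected graph on vertex set $\partial H\cup F_H$. Operators. $\mathbf{X}^{(H)}=\mathbf{L}^{(H)}_{\partial H,F_H}(\mathbf{L}^{(H)}_{F_H,F_H})^{-1}$; $\mathbf{\Pi}^{(i)}=\mathbf{I}-\sum_{H\in\mathcal{T}(i)}\mathbf{X}^{(H)}$ for $0\le i\le\eta-1$; $\widetilde{\mathbf{\Gamma}}=\sum_{H\in\mathcal{T}}(\mathbf{L}^{(H)}_{F_H,F_H})^{-1}$. For a node $D$ with parent $P$, $\mathbf{M}_{(D,P)}=(\mathbf{L}^{(D)})^{-1}\widetilde{\mathrm{SC}}(\mathbf{L}^{(D)},\partial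 D)$; $\mathbf{M}^{(H)}=\mathbf{W}^{1/2}\mathbf{B}[H]$ for a leaf $H$, and $\mathbf{M}^{(H)}=\mathbf{M}^{(D_1)}\mathbf{M}_{(D_1,H)}+\mathbf{M}^{(D_2)}\mathbf{M}_{(D_2,H)}$ for a non-leaf $H$ with children $D_1,D_2$. *)

theory Defs
  imports "HOL-Analysis.Analysis"
begin

definition pinv :: "real^'n^'m \<Rightarrow> real^'m^'n" where
  "pinv A = (THE X. A ** X ** A = A \<and> X ** A ** X = X \<and>
                    transpose (A ** X) = A ** X \<and> transpose (X ** A) = X ** A)"

definition submat :: "real^'n^'m \<Rightarrow> 'm set \<Rightarrow> 'n set \<Rightarrow> real^'n^'m" where
  "submat A S T = (\<chi> i j. if i \<in> S \<and> j \<in> T then A $ i $ j else 0)"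

definition vrestr :: "real^'n \<Rightarrow> 'n set \<Rightarrow> real^'n" where
  "vrestr x S = (\<chi> i. if i \<in> S then x $ i else 0)"

definition diagm :: "('n \<Rightarrow> real) \<Rightarrow> real^'n^'n" where
  "diagm d = (\<chi> i j. if i = j then d i else 0)"

text \<open>An edge e has endpoints ends e = (a, b) (orientation arbitrary).
  Signed incidence matrix: row e has +1 at the first endpoint, -1 at the second.\<close>
definition incid :: "('e \<Rightarrow> 'v \<times> 'v) \<Rightarrow> real^'v^'e" where
  "incid ends = (\<chi> e v. if v = fst (ends e) then 1 else if v = snd (ends e) then -1 else 0)"

definition incid_on :: "('e \<Rightarrow> 'v \<times> 'v) \<Rightarrow> 'e set \<Rightarrow> real^'v^'e" where
  "incid_on ends EH = (\<chi> e v. if e \<in> EH then incid ends $ e $ v else 0)"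

definition adj :: "('e \<Rightarrow> 'v \<times> 'v) \<Rightarrow> ('v \<times> 'v) set" where
  "adj ends = {(a, b). \<exists>e. ends e = (a, b) \<or> ends e = (b, a)}"

definition graph_connected :: "('e \<Rightarrow> 'v \<times> 'v) \<Rightarrow> bool" where
  "graph_connected ends \<longleftrightarrow> (\<forall>u v. (u, v) \<in> (adj ends)\<^sup>*)"

definition Vof :: "('e \<Rightarrow> 'v \<times> 'v) \<Rightarrow> 'e set \<Rightarrow> 'v set" where
  "Vof ends EH = (\<Union>e\<in>EH. {fst (ends e), snd (ends e)})"

definition laplacian_on :: "'v set \<Rightarrow> real^'v^'v \<Rightarrow> bool" where
  "laplacian_on S A \<longleftrightarrow> transpose A = A \<and>
     (\<forall>i j. i \<noteq> j \<longrightarrow> A $ i $ j \<le> 0) \<and>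
     (\<forall>i. (\<Sum>j\<in>UNIV. A $ i $ j) = 0) \<and>
     (\<forall>i j. A $ i $ j \<noteq> 0 \<longrightarrow> i \<in> S \<and> j \<in> S)"

definition connected_laplacian_on :: "'v set \<Rightarrow> real^'v^'v \<Rightarrow> bool" where
  "connected_laplacian_on S A \<longleftrightarrow> laplacian_on S A \<and>
     (\<forall>u\<in>S. \<forall>v\<in>S. (u, v) \<in> {(i, j). i \<noteq> j \<and> A $ i $ j \<noteq> 0}\<^sup>*)"

text \<open>Rooted binary tree of node identifiers; the data of node h is given by functions
  RE h (edge set E(H)), Bd h (boundary), Sep h (separator S(H)), SC h (the given
  approximate Schur complement).\<close>
datatype 'n stree = Lf 'n | Nd 'n "'n stree" "'n stree"

fun rt :: "'n stree \<Rightarrow> 'n" where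
  "rt (Lf h) = h" | "rt (Nd h l r) = h"

fun subtrees :: "'n stree \<Rightarrow> 'n stree list" where
  "subtrees (Lf h) = [Lf h]"
| "subtrees (Nd h l r) = Nd h l r # subtrees l @ subtrees r"

text \<open>Level eta(H): maximal number of tree edges on a downward path.\<close>
fun height :: "'n stree \<Rightarrow> nat" where
  "height (Lf h) = 0"
| "height (Nd h l r) = Suc (max (height l) (height r))"

fun sep_tree_ok :: "('e \<Rightarrow> 'v \<times> 'v) \<Rightarrow> ('n \<Rightarrow> 'e set) \<Rightarrow> ('n \<Rightarrow> 'v set)
                    \<Rightarrow> ('n \<Rightarrow> 'v set) \<Rightarrow> 'n stree \<Rightarrow> bool" where
  "sep_tree_ok ends RE Bd Sep (Lf h) \<longleftrightarrow> Sep h = {}"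
| "sep_tree_ok ends RE Bd Sep (Nd h l r) \<longleftrightarrow>
     RE (rt l) \<union> RE (rt r) = RE h \<and> RE (rt l) \<inter> RE (rt r) = {} \<and>
     Vof ends (RE (rt l)) \<inter> Vof ends (RE (rt r)) = Sep h \<and>
     Bd (rt l) = (Bd h \<union> Sep h) \<inter> Vof ends (RE (rt l)) \<and>
     Bd (rt r) = (Bd h \<union> Sep h) \<inter> Vof ends (RE (rt r)) \<and>
     sep_tree_ok ends RE Bd Sep l \<and> sep_tree_ok ends RE Bd Sep r"

fun Fset :: "('e \<Rightarrow> 'v \<times> 'v) \<Rightarrow> ('n \<Rightarrow> 'e set) \<Rightarrow> ('n \<Rightarrow> 'v set)
             \<Rightarrow> ('n \<Rightarrow> 'v set) \<Rightarrow> 'n stree \<Rightarrow> 'v set" where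
  "Fset ends RE Bd Sep (Lf h) = Vof ends (RE h) - Bd h"
| "Fset ends RE Bd Sep (Nd h l r) = Sep h - Bd h"

fun Lap :: "('e::finite \<Rightarrow> 'v::finite \<times> 'v) \<Rightarrow> ('e \<Rightarrow> real) \<Rightarrow> ('n \<Rightarrow> 'e set)
            \<Rightarrow> ('n \<Rightarrow> real^'v^'v) \<Rightarrow> 'n stree \<Rightarrow> real^'v^'v" where
  "Lap ends w RE SC (Lf h) =
     transpose (incid_on ends (RE h)) ** diagm w ** incid_on ends (RE h)"
| "Lap ends w RE SC (Nd h l r) = SC (rt l) + SC (rt r)"

fun Mrec :: "('e::finite \<Rightarrow> 'v::finite \<times> 'v) \<Rightarrow> ('e \<Rightarrow> real) \<Rightarrow> ('n \<Rightarrow> 'e set)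
            \<Rightarrow> ('n \<Rightarrow> real^'v^'v) \<Rightarrow> 'n stree \<Rightarrow> real^'v^'e" where
  "Mrec ends w RE SC (Lf h) = diagm (\<lambda>e. sqrt (w e)) ** incid_on ends (RE h)"
| "Mrec ends w RE SC (Nd h l r) =
     Mrec ends w RE SC l ** (pinv (Lap ends w RE SC l) ** SC (rt l)) +
     Mrec ends w RE SC r ** (pinv (Lap ends w RE SC r) ** SC (rt r))"

definition Xop :: "('e::finite \<Rightarrow> 'v::finite \<times> 'v) \<Rightarrow> ('e \<Rightarrow> real) \<Rightarrow> ('n \<Rightarrow> 'e set)
            \<Rightarrow> ('n \<Rightarrow> 'v set) \<Rightarrow> ('n \<Rightarrow> 'v set) \<Rightarrow> ('n \<Rightarrow> real^'v^'v) \<Rightarrow> 'n stree \<Rightarrow> real^'v^'v" where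
  "Xop ends w RE Bd Sep SC t =
     submat (Lap ends w RE SC t) (Bd (rt t)) (Fset ends RE Bd Sep t) **
     pinv (submat (Lap ends w RE SC t) (Fset ends RE Bd Sep t) (Fset ends RE Bd Sep t))"

definition PiOp :: "('e::finite \<Rightarrow> 'v::finite \<times> 'v) \<Rightarrow> ('e \<Rightarrow> real) \<Rightarrow> ('n \<Rightarrow> 'e set)
            \<Rightarrow> ('n \<Rightarrow> 'v set) \<Rightarrow> ('n \<Rightarrow> 'v set) \<Rightarrow> ('n \<Rightarrow> real^'v^'v) \<Rightarrow> 'n stree \<Rightarrow> nat \<Rightarrow> real^'v^'v" where
  "PiOp ends w RE Bd Sep SC T i =
     mat 1 - sum_list (map (Xop ends w RE Bd Sep SC) (filter (\<lambda>t. height t = i) (subtrees T)))"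

fun PiProd :: "('e::finite \<Rightarrow> 'v::finite \<times> 'v) \<Rightarrow> ('e \<Rightarrow> real) \<Rightarrow> ('n \<Rightarrow> 'e set)
            \<Rightarrow> ('n \<Rightarrow> 'v set) \<Rightarrow> ('n \<Rightarrow> 'v set) \<Rightarrow> ('n \<Rightarrow> real^'v^'v) \<Rightarrow> 'n stree
            \<Rightarrow> nat \<Rightarrow> real^'v \<Rightarrow> real^'v" where
  "PiProd ends w RE Bd Sep SC T 0 d = d"
| "PiProd ends w RE Bd Sep SC T (Suc k) d =
     PiOp ends w RE Bd Sep SC T k *v PiProd ends w RE Bd Sep SC T k d"

definition GammaT :: "('e::finite \<Rightarrow> 'v::finite \<times> 'v) \<Rightarrow> ('e \<Rightarrow> real) \<Rightarrow> ('n \<Rightarrow> 'e set)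
            \<Rightarrow> ('n \<Rightarrow> 'v set) \<Rightarrow> ('n \<Rightarrow> 'v set) \<Rightarrow> ('n \<Rightarrow> real^'v^'v) \<Rightarrow> 'n stree \<Rightarrow> real^'v^'v" where
  "GammaT ends w RE Bd Sep SC T =
     sum_list (map (\<lambda>t. pinv (submat (Lap ends w RE SC t) (Fset ends RE Bd Sep t) (Fset ends RE Bd Sep t)))
                   (subtrees T))"

end

theory Submission
  imports Defs
begin

text \<open>
  Let \<open>d = B\<^sup>T W\<^sup>1\<^sup>/\<^sup>2 v\<close> and let \<open>u\<close> be the product of the \<open>\<Pi>\<close>'s applied to \<open>d\<close>.
  Each \<open>X(H)\<close> reads only the coordinates in \<open>F(H)\<close> and writes only those in \<open>\<partial>H\<close>, which lie in
  the \<open>F\<close>-sets of strictly higher levels; so the \<open>\<Pi>\<close>'s perform back substitution and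
  \<open>u + \<Sum>\<^sub>H X(H) u = d\<close>.
  By induction up the tree, \<open>B\<^sup>T W\<^sup>1\<^sup>/\<^sup>2 M(H) = L(H)\<close>: at an inner node one needs
  \<open>L(D) L(D)\<^sup>+ SC(D) = SC(D)\<close>, which holds because the kernel of the connected Laplacian \<open>L(D)\<close>
  consists of vectors constant on its support, and these are annihilated by the Laplacian \<open>SC(D)\<close>.
  Since \<open>z\<close> restricted to \<open>F(H)\<close> is \<open>L\<^sub>F\<^sub>F(H)\<^sup>+ u\<close>, it remains to see
  \<open>L(H) L\<^sub>F\<^sub>F(H)\<^sup>+ u = X(H) u + u|\<^sub>F\<^sub>(\<^sub>H\<^sub>)\<close> and to sum over \<open>H\<close>. The identity holds when
  \<open>u|\<^sub>F\<^sub>(\<^sub>H\<^sub>)\<close> is orthogonal to the kernel of \<open>L\<^sub>F\<^sub>F(H)\<close>, which is trivial unless \<open>\<partial>H = {}\<close>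
  and then consists of the constants on \<open>F(H)\<close>. In that case no edge leaves the union of the
  \<open>F\<close>-sets below \<open>H\<close>, so \<open>d\<close> sums to zero there, and summing the triangular system over this
  union shows, by induction on the height, that \<open>u\<close> sums to zero on \<open>F(H)\<close>.
\<close>

section \<open>The Moore--Penrose pseudoinverse of a symmetric matrix\<close>

definition moore_penrose :: "real^'n^'m \<Rightarrow> real^'m^'n \<Rightarrow> bool" where
  "moore_penrose A X \<longleftrightarrow> A ** X ** A = A \<and> X ** A ** X = X \<and>
     transpose (A ** X) = A ** X \<and> transpose (X ** A) = X ** A"

lemma symmetric_matrix_inner:
  fixes A :: "real^'n^'n"
  assumes "transpose A = A"
  shows "(A *v x) \<bullet> y = x \<bullet> (A *v y)"
  by (metis assms dot_lmul_matrix vector_transpose_matrix)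

lemma symmetric_matrix_if_inner:
  fixes M :: "real^'n^'n"
  assumes "\<And>x y. (M *v x) \<bullet> y = x \<bullet> (M *v y)"
  shows "transpose M = M"
proof -
  have "M $ i $ j = M $ j $ i" for i j
    using assms[of "axis j 1" "axis i 1"]
    by (simp add: inner_vec_def matrix_vector_mult_def axis_def if_distrib if_distribR
        cong del: if_weak_cong)
  then show ?thesis by (simp add: transpose_def vec_eq_iff)
qed

lemma moore_penrose_unique:
  assumes "moore_penrose A X" "moore_penrose A Y"
  shows "X = Y"
proof -
  have h1: "A ** X ** A = A" and h2: "X ** A ** X = X" and h3: "transpose (A ** X) = A ** X"
    and h4: "transpose (X ** A) = X ** A" using assms(1) by (auto simp: moore_penrose_def)
  have k1: "A ** Y ** A = A" and k2: "Y ** A ** Y = Y" and k3: "transpose (A ** Y) = A ** Y"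
    and k4: "transpose (Y ** A) = Y ** A" using assms(2) by (auto simp: moore_penrose_def)
  have tA: "transpose A = transpose A ** (A ** Y)"
    by (metis k1 k3 matrix_transpose_mul)
  have tA': "transpose A = (X ** A) ** transpose A"
    by (metis h1 h4 matrix_mul_assoc matrix_transpose_mul)
  have "X = X ** (A ** X)" using h2 by (simp only: matrix_mul_assoc)
  also have "\<dots> = X ** (transpose X ** transpose A)" using h3 by (simp only: matrix_transpose_mul)
  also have "\<dots> = X ** ((transpose X ** transpose A) ** (A ** Y))"
    by (subst tA) (simp only: matrix_mul_assoc)
  also have "\<dots> = X ** ((A ** X) ** (A ** Y))" using h3 by (simp only: matrix_transpose_mul)
  also have "\<dots> = (X ** A ** X) ** A ** Y" by (simp only: matrix_mul_assoc)
  also have "\<dots> = X ** A ** Y" using h2 by simp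
  finally have X: "X = X ** A ** Y" .
  have "Y = (Y ** A) ** Y" using k2 by simp
  also have "\<dots> = (transpose A ** transpose Y) ** Y" using k4 by (simp only: matrix_transpose_mul)
  also have "\<dots> = ((X ** A) ** (transpose A ** transpose Y)) ** Y"
    by (subst tA') (simp only: matrix_mul_assoc)
  also have "\<dots> = ((X ** A) ** (Y ** A)) ** Y" using k4 by (simp only: matrix_transpose_mul)
  also have "\<dots> = X ** A ** (Y ** A ** Y)" by (simp only: matrix_mul_assoc)
  also have "\<dots> = X ** A ** Y" using k2 by simp
  finally show ?thesis using X by simp
qed

text \<open>
  The pseudoinverse is built from the inverse \<open>g\<close> of \<open>A\<close> on its range \<open>R\<close>: as \<open>A\<close> is
  symmetric, \<open>y \<mapsto> g (A y)\<close> is the orthogonal projection onto \<open>R\<close>, and \<open>X y = g (g (A y))\<close>.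
\<close>
lemma moore_penrose_exists_symmetric:
  fixes A :: "real^'n^'n"
  assumes sA: "transpose A = A"
  shows "\<exists>X. moore_penrose A X"
proof -
  define R where "R = range ((*v) A)"
  have subR: "subspace R" unfolding R_def
    by (metis linear_subspace_image matrix_vector_mul_linear subspace_UNIV)
  have AR: "A *v x \<in> R" for x by (simp add: R_def)
  have ker_AA: "A *v x = 0" if "A *v (A *v x) = 0" for x
    using symmetric_matrix_inner[OF sA, of x "A *v x"] that by simp
  have inj: "inj_on ((*v) A) R"
  proof (rule inj_onI)
    fix x y assume "x \<in> R" "y \<in> R" "A *v x = A *v y"
    then obtain a b where ab: "x = A *v a" "y = A *v b" "A *v (A *v (a - b)) = 0"
      by (auto simp: R_def matrix_vector_mult_diff_distrib)
    have "A *v (a - b) = 0" using ab(3) by (rule ker_AA)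
    then show "x = y" using ab by (simp add: matrix_vector_mult_diff_distrib)
  qed
  have imgR: "(*v) A ` R = R"
  proof -
    have "span R = R" using subR by (rule span_eq_iff[THEN iffD2])
    then have "dim ((*v) A ` R) = dim R"
      using dim_image_eq[of "(*v) A" R] inj by (simp del: span_eq_iff)
    moreover have "(*v) A ` R \<subseteq> R" "subspace ((*v) A ` R)"
      using AR by (auto intro: linear_subspace_image subR)
    ultimately show ?thesis using subspace_dim_equal subR by (metis order_refl)
  qed
  define g where "g y = (SOME r. r \<in> R \<and> A *v r = y)" for y
  have g_spec: "g y \<in> R \<and> A *v g y = y" if "y \<in> R" for y
  proof -
    have "\<exists>r. r \<in> R \<and> A *v r = y" using that imgR by (metis imageE)
    then show ?thesis unfolding g_def by (rule someI_ex)
  qed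
  have g_eq: "g y = r" if "r \<in> R" "A *v r = y" for r y
  proof -
    have "y \<in> R" using that imgR by blast
    then show ?thesis using g_spec inj that by (metis inj_on_def)
  qed
  define E where "E y = g (A *v y)" for y
  have E: "E x \<in> R" "A *v E x = A *v x" for x using g_spec AR by (auto simp: E_def)
  have E_id: "E r = r" if "r \<in> R" for r using that by (auto simp: E_def intro: g_eq)
  have orth: "r \<bullet> k = 0" if "r \<in> R" "A *v k = 0" for r k
    using that symmetric_matrix_inner[OF sA] by (auto simp: R_def)
  have E_sym: "E x \<bullet> y = x \<bullet> E y" for x y
  proof -
    have "E x \<bullet> (y - E y) = 0" "(x - E x) \<bullet> E y = 0"
      using orth[of "E x" "y - E y"] orth[of "E y" "x - E x"]
      by (auto simp: E matrix_vector_mult_diff_distrib inner_commute)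
    then show ?thesis by (simp add: inner_diff_left inner_diff_right)
  qed
  define X0 where "X0 y = g (E y)" for y
  have g_add: "g (x + y) = g x + g y" if "x \<in> R" "y \<in> R" for x y
    by (rule g_eq) (use that g_spec subR in \<open>auto simp: subspace_add matrix_vector_right_distrib\<close>)
  have g_scale: "g (c *\<^sub>R x) = c *\<^sub>R g x" if "x \<in> R" for x c
    by (rule g_eq) (use that g_spec subR in \<open>auto simp: subspace_scale matrix_vector_mult_scaleR\<close>)
  have "linear X0"
    unfolding linear_iff X0_def E_def
    using g_add g_scale g_spec AR by (simp add: matrix_vector_right_distrib matrix_vector_mult_scaleR)
  then have Xm: "matrix X0 *v y = X0 y" for y
    by (simp add: matrix_works)
  have AX: "(A ** matrix X0) *v y = E y" for y
    by (simp add: matrix_vector_mul_assoc[symmetric] Xm X0_def g_spec E)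
  have XA: "(matrix X0 ** A) *v y = E y" for y
    using g_eq[of "A *v y" "A *v (A *v y)"]
    by (simp add: matrix_vector_mul_assoc[symmetric] Xm X0_def E_def AR)
  have "moore_penrose A (matrix X0)"
    unfolding moore_penrose_def
  proof (intro conjI)
    show "A ** matrix X0 ** A = A"
      by (simp add: matrix_eq matrix_vector_mul_assoc[symmetric]
          AX[unfolded matrix_vector_mul_assoc[symmetric]] E_id AR)
    show "matrix X0 ** A ** matrix X0 = matrix X0"
      by (simp add: matrix_eq matrix_vector_mul_assoc[symmetric]
          XA[unfolded matrix_vector_mul_assoc[symmetric]] E_id Xm X0_def g_spec E)
    show "transpose (A ** matrix X0) = A ** matrix X0"
      by (rule symmetric_matrix_if_inner) (simp add: AX E_sym)
    show "transpose (matrix X0 ** A) = matrix X0 ** A"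
      by (rule symmetric_matrix_if_inner) (simp add: XA E_sym)
  qed
  then show ?thesis ..
qed

lemma pinv_symmetric:
  fixes A :: "real^'n^'n"
  assumes "transpose A = A"
  shows "moore_penrose A (pinv A)"
proof -
  obtain X where X: "moore_penrose A X" using moore_penrose_exists_symmetric[OF assms] by blast
  have "pinv A = X" unfolding pinv_def
    by (rule the_equality) (use X moore_penrose_unique in \<open>auto simp: moore_penrose_def\<close>)
  then show ?thesis using X by simp
qed

lemma pinv_solves:
  fixes A :: "real^'n^'n"
  assumes sA: "transpose A = A" and ker: "\<And>k. A *v k = 0 \<Longrightarrow> k \<bullet> c = 0"
  shows "A *v (pinv A *v c) = c"
proof -
  define P where "P = A ** pinv A"
  have mp: "moore_penrose A (pinv A)" by (rule pinv_symmetric[OF sA])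
  then have sP: "transpose P = P" and PP: "P ** P = P"
    unfolding moore_penrose_def P_def by (simp, metis matrix_mul_assoc)
  have AP: "A ** P = A"
    using mp sA unfolding moore_penrose_def P_def by (metis matrix_transpose_mul)
  define k where "k = c - P *v c"
  have "A *v k = 0" by (simp add: k_def matrix_vector_mult_diff_distrib matrix_vector_mul_assoc AP)
  then have kc: "k \<bullet> c = 0" by (rule ker)
  have "(P *v c) \<bullet> (P *v c) = c \<bullet> (P *v c)"
    using symmetric_matrix_inner[OF sP, of c "P *v c"] by (simp add: matrix_vector_mul_assoc PP)
  then have "k \<bullet> (P *v c) = 0" by (simp add: k_def inner_diff_left)
  then have "k \<bullet> k = 0" using kc by (simp add: k_def inner_diff_right)
  then have "k = 0" by simp
  then show ?thesis by (simp add: k_def P_def matrix_vector_mul_assoc)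
qed

lemma pinv_cancel_left:
  fixes A S :: "real^'n^'n"
  assumes "transpose A = A" "transpose S = S" and ker: "\<And>k. A *v k = 0 \<Longrightarrow> S *v k = 0"
  shows "A ** (pinv A ** S) = S"
proof (subst matrix_eq, intro allI)
  fix x
  have "A *v (pinv A *v (S *v x)) = S *v x"
  proof (rule pinv_solves[OF assms(1)])
    fix k assume "A *v k = 0"
    then show "k \<bullet> (S *v x) = 0"
      using ker symmetric_matrix_inner[OF assms(2), of k x] by (simp add: inner_commute)
  qed
  then show "(A ** (pinv A ** S)) *v x = S *v x"
    by (simp add: matrix_vector_mul_assoc[symmetric])
qed

lemma matrix_vector_mult_vrestr:
  assumes "\<And>i j. A $ i $ j \<noteq> 0 \<Longrightarrow> j \<in> F"
  shows "A *v vrestr u F = A *v u"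
  using assms by (auto simp: matrix_vector_mult_def vrestr_def vec_eq_iff intro!: sum.cong) metis

lemma matrix_vector_mult_zero_row:
  assumes "\<And>j. A $ i $ j = 0"
  shows "(A *v u) $ i = 0"
  using assms by (simp add: matrix_vector_mult_def)

lemma pinv_supported:
  fixes A :: "real^'n^'n"
  assumes sA: "transpose A = A" and supp: "\<And>i j. A $ i $ j \<noteq> 0 \<Longrightarrow> i \<in> F \<and> j \<in> F"
  shows pinv_vanishes_outside: "i \<notin> F \<Longrightarrow> (pinv A *v u) $ i = 0"
    and pinv_vrestr: "pinv A *v vrestr u F = pinv A *v u"
proof -
  have mp: "moore_penrose A (pinv A)" by (rule pinv_symmetric[OF sA])
  have right: "pinv A = pinv A ** (transpose (pinv A) ** A)"
    and left: "pinv A = A ** (transpose (pinv A) ** pinv A)"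
    using mp unfolding moore_penrose_def by (metis matrix_mul_assoc matrix_transpose_mul sA)+
  have "A *v vrestr u F = A *v u"
    by (rule matrix_vector_mult_vrestr) (use supp in blast)
  then show "pinv A *v vrestr u F = pinv A *v u"
    by (metis right matrix_vector_mul_assoc)
  assume "i \<notin> F"
  then have "(A *v ((transpose (pinv A) ** pinv A) *v u)) $ i = 0"
    using supp by (intro matrix_vector_mult_zero_row) blast
  then show "(pinv A *v u) $ i = 0"
    by (metis left matrix_vector_mul_assoc)
qed

section \<open>Kernels of Laplacians\<close>

lemma laplacian_on_entry_sym:
  assumes "laplacian_on S L"
  shows "L $ i $ j = L $ j $ i"
proof -
  have "transpose L $ j $ i = L $ j $ i" using assms by (simp add: laplacian_on_def)
  then show ?thesis by (simp add: transpose_def)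
qed

lemma laplacian_on_row_sum: "laplacian_on S L \<Longrightarrow> (\<Sum>j\<in>UNIV. L $ i $ j) = 0"
  unfolding laplacian_on_def by auto

lemma laplacian_on_column_sum: "laplacian_on S L \<Longrightarrow> (\<Sum>i\<in>UNIV. L $ i $ j) = 0"
  using laplacian_on_entry_sym[of S L] unfolding laplacian_on_def by auto

lemma laplacian_on_support: "laplacian_on S L \<Longrightarrow> L $ i $ j \<noteq> 0 \<Longrightarrow> i \<in> S \<and> j \<in> S"
  unfolding laplacian_on_def by auto

lemma laplacian_on_sum_mult: "laplacian_on S L \<Longrightarrow> (\<Sum>i\<in>UNIV. (L *v y) $ i) = 0"
  by (simp add: matrix_vector_mult_def sum.swap[of _ UNIV] sum_distrib_right[symmetric]
      laplacian_on_column_sum)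

text \<open>\<open>k \<bullet> L k = - (\<Sum>i j. L\<^sub>i\<^sub>j (k\<^sub>i - k\<^sub>j)\<^sup>2) / 2\<close> is a sum of nonnegative terms.\<close>
lemma laplacian_on_quadratic_zero:
  fixes L :: "real^'n^'n"
  assumes l: "laplacian_on S L" and q: "k \<bullet> (L *v k) = 0" and "L $ i $ j \<noteq> 0"
  shows "k $ i = k $ j"
proof -
  define q where "q i j = L $ i $ j * (k $ i - k $ j)^2" for i j
  have np: "q i j \<le> 0" for i j
    using l unfolding q_def laplacian_on_def by (cases "i = j") (auto simp: mult_nonpos_nonneg)
  have e1: "(\<Sum>i\<in>UNIV. \<Sum>j\<in>UNIV. L $ i $ j * (k $ i)^2) = 0"
    by (simp add: sum_distrib_right[symmetric] laplacian_on_row_sum[OF l])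
  have e2: "(\<Sum>i\<in>UNIV. \<Sum>j\<in>UNIV. L $ i $ j * (k $ j)^2) = 0"
    by (subst sum.swap) (simp add: sum_distrib_right[symmetric] laplacian_on_column_sum[OF l])
  have e3: "(\<Sum>i\<in>UNIV. \<Sum>j\<in>UNIV. L $ i $ j * (k $ i * k $ j)) = k \<bullet> (L *v k)"
    by (simp add: inner_vec_def matrix_vector_mult_def sum_distrib_left mult_ac)
  have "(\<Sum>i\<in>UNIV. \<Sum>j\<in>UNIV. q i j) =
      (\<Sum>i\<in>UNIV. \<Sum>j\<in>UNIV. L $ i $ j * (k $ i)^2) + (\<Sum>i\<in>UNIV. \<Sum>j\<in>UNIV. L $ i $ j * (k $ j)^2)
      - 2 * (\<Sum>i\<in>UNIV. \<Sum>j\<in>UNIV. L $ i $ j * (k $ i * k $ j))"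
    by (simp add: q_def power2_diff algebra_simps sum.distrib sum_subtractf sum_distrib_left)
  then have "(\<Sum>i\<in>UNIV. \<Sum>j\<in>UNIV. - q i j) = 0"
    using e1 e2 e3 q by (simp add: sum_negf)
  then have "(\<Sum>j\<in>UNIV. - q i j) = 0"
    using np sum_nonneg_eq_0_iff[of UNIV "\<lambda>i. \<Sum>j\<in>UNIV. - q i j"] by (simp add: sum_nonneg)
  then have "q i j = 0" using np sum_nonneg_eq_0_iff[of UNIV "\<lambda>j. - q i j"] by simp
  then show ?thesis using assms(3) by (simp add: q_def)
qed

lemma connected_laplacian_on_kernel_const:
  fixes L :: "real^'n^'n"
  assumes c: "connected_laplacian_on S L" and q: "k \<bullet> (L *v k) = 0" and "a \<in> S" "b \<in> S"
  shows "k $ a = k $ b"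
proof -
  have "(a, b) \<in> {(i, j). i \<noteq> j \<and> L $ i $ j \<noteq> 0}\<^sup>*"
    using c assms by (simp add: connected_laplacian_on_def)
  then show ?thesis
    by induction (use c laplacian_on_quadratic_zero[OF _ q] in \<open>auto simp: connected_laplacian_on_def\<close>)
qed

lemma laplacian_on_mult_const:
  assumes l: "laplacian_on S L" and const: "\<And>a b. a \<in> S \<Longrightarrow> b \<in> S \<Longrightarrow> k $ a = k $ b"
  shows "L *v k = 0"
proof (cases "S = {}")
  case True
  then show ?thesis using laplacian_on_support[OF l] by (fastforce simp: vec_eq_iff matrix_vector_mult_def)
next
  case False
  then obtain b where b: "b \<in> S" by blast
  have "(L *v k) $ i = (\<Sum>j\<in>UNIV. L $ i $ j) * k $ b" for i
    unfolding matrix_vector_mult_def sum_distrib_right vec_lambda_beta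
  proof (rule sum.cong[OF refl])
    fix j
    show "L $ i $ j * k $ j = L $ i $ j * k $ b"
      using laplacian_on_support[OF l, of i j] const[OF _ b, of j] by (cases "L $ i $ j = 0") auto
  qed
  then show ?thesis by (simp add: vec_eq_iff laplacian_on_row_sum[OF l])
qed

section \<open>Separator trees\<close>

lemma subtrees_self: "t \<in> set (subtrees t)"
  by (cases t) auto

lemma subtrees_trans: "a \<in> set (subtrees b) \<Longrightarrow> t \<in> set (subtrees a) \<Longrightarrow> t \<in> set (subtrees b)"
  by (induction b) auto

lemma subtrees_height: "t \<in> set (subtrees a) \<Longrightarrow> t = a \<or> height t < height a"
  by (induction a) (auto simp: less_Suc_eq_le max.coboundedI1 max.coboundedI2 dest: le_less_trans)

lemma subtrees_height_le: "t \<in> set (subtrees a) \<Longrightarrow> height t \<le> height a"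
  using subtrees_height by fastforce

lemma subtrees_children:
  "Nd h l r \<in> set (subtrees T) \<Longrightarrow> l \<in> set (subtrees T) \<and> r \<in> set (subtrees T)"
  using subtrees_trans[of "Nd h l r" T] subtrees_self by auto

lemma sep_tree_ok_subtree:
  "sep_tree_ok ends RE Bd Sep a \<Longrightarrow> t \<in> set (subtrees a) \<Longrightarrow> sep_tree_ok ends RE Bd Sep t"
  by (induction a) auto

lemma RE_subtree:
  "sep_tree_ok ends RE Bd Sep a \<Longrightarrow> t \<in> set (subtrees a) \<Longrightarrow> RE (rt t) \<subseteq> RE (rt a)"
  by (induction a) auto

lemma Vof_Un: "Vof ends (A \<union> B) = Vof ends A \<union> Vof ends B"
  by (auto simp: Vof_def)

lemma Fset_Bd_disjoint: "Fset ends RE Bd Sep t \<inter> Bd (rt t) = {}"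
  by (cases t) auto

lemma Fset_subset_Vof:
  assumes "sep_tree_ok ends RE Bd Sep t"
  shows "Fset ends RE Bd Sep t \<subseteq> Vof ends (RE (rt t))"
proof (cases t)
  case (Nd h l r)
  then have "Sep h \<subseteq> Vof ends (RE h)"
    using assms Vof_Un[of ends "RE (rt l)" "RE (rt r)"] by auto
  then show ?thesis using Nd by auto
qed auto

lemma Bd_children_subset:
  assumes "sep_tree_ok ends RE Bd Sep (Nd h l r)" "c = l \<or> c = r"
  shows "Bd (rt c) \<subseteq> Bd h \<union> Fset ends RE Bd Sep (Nd h l r)"
  using assms by auto

lemma Bd_subset_ancestor_Fsets:
  "sep_tree_ok ends RE Bd Sep a \<Longrightarrow> t \<in> set (subtrees a) \<Longrightarrow>
   Bd (rt t) \<subseteq> Bd (rt a) \<union>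
     \<Union>{Fset ends RE Bd Sep s | s. s \<in> set (subtrees a) \<and> t \<in> set (subtrees s) \<and> t \<noteq> s}"
proof (induction a)
  case (Nd h l r)
  let ?a = "Nd h l r"
  define U where
    "U a = \<Union>{Fset ends RE Bd Sep s | s. s \<in> set (subtrees a) \<and> t \<in> set (subtrees s) \<and> t \<noteq> s}"
    for a
  show ?case
  proof (cases "t = ?a")
    case True
    then show ?thesis by blast
  next
    case False
    then obtain c where c: "c = l \<or> c = r" "t \<in> set (subtrees c)" using Nd.prems(2) by auto
    have "sep_tree_ok ends RE Bd Sep c" using Nd.prems(1) c(1) by auto
    then have "Bd (rt t) \<subseteq> Bd (rt c) \<union> U c" using c Nd.IH unfolding U_def by blast
    moreover have "U c \<subseteq> U ?a" using c(1) by (auto simp: U_def)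
    moreover have "Bd (rt c) \<subseteq> Bd h \<union> Fset ends RE Bd Sep ?a"
      using Bd_children_subset[OF Nd.prems(1) c(1)] .
    moreover have "Fset ends RE Bd Sep ?a \<subseteq> U ?a"
      using False Nd.prems(2) subtrees_self unfolding U_def by blast
    ultimately have "Bd (rt t) \<subseteq> Bd h \<union> U ?a" by blast
    then show ?thesis by (simp add: U_def)
  qed
qed simp

lemma Vof_subset_Bd_Fsets:
  "sep_tree_ok ends RE Bd Sep a \<Longrightarrow>
   Vof ends (RE (rt a)) \<subseteq> Bd (rt a) \<union> \<Union>{Fset ends RE Bd Sep s | s. s \<in> set (subtrees a)}"
proof (induction a)
  case (Nd h l r)
  let ?a = "Nd h l r"
  define U where "U a = \<Union>{Fset ends RE Bd Sep s | s. s \<in> set (subtrees a)}" for a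
  have "Vof ends (RE (rt c)) \<subseteq> Bd h \<union> U ?a" if c: "c = l \<or> c = r" for c
  proof -
    have "Vof ends (RE (rt c)) \<subseteq> Bd (rt c) \<union> U c" using c Nd by (auto simp: U_def)
    moreover have "U c \<subseteq> U ?a" using c by (auto simp: U_def)
    moreover have "Bd (rt c) \<subseteq> Bd h \<union> Fset ends RE Bd Sep ?a"
      using Bd_children_subset[OF Nd.prems c] .
    moreover have "Fset ends RE Bd Sep ?a \<subseteq> U ?a" using subtrees_self unfolding U_def by blast
    ultimately show ?thesis by blast
  qed
  moreover have "Vof ends (RE h) = Vof ends (RE (rt l)) \<union> Vof ends (RE (rt r))"
    using Nd.prems by (auto simp: Vof_Un[symmetric])
  ultimately have "Vof ends (RE h) \<subseteq> Bd h \<union> U ?a" by auto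
  then show ?case by (simp add: U_def)
qed auto

definition boundary_separates :: "('e \<Rightarrow> 'v \<times> 'v) \<Rightarrow> ('n \<Rightarrow> 'e set) \<Rightarrow> ('n \<Rightarrow> 'v set)
    \<Rightarrow> 'n stree \<Rightarrow> bool" where
  "boundary_separates ends RE Bd a \<longleftrightarrow> (\<forall>e. e \<notin> RE (rt a) \<longrightarrow>
      {fst (ends e), snd (ends e)} \<inter> Vof ends (RE (rt a)) \<subseteq> Bd (rt a))"

lemma boundary_separates_child:
  assumes ok: "sep_tree_ok ends RE Bd Sep (Nd h l r)"
    and sep: "boundary_separates ends RE Bd (Nd h l r)" and c: "c = l \<or> c = r"
  shows "boundary_separates ends RE Bd c"
  unfolding boundary_separates_def
proof (intro allI impI subsetI)
  obtain c' where c': "RE (rt c) \<union> RE (rt c') = RE h"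
    "Vof ends (RE (rt c)) \<inter> Vof ends (RE (rt c')) = Sep h"
    using ok c by auto
  have bd: "Bd (rt c) = (Bd h \<union> Sep h) \<inter> Vof ends (RE (rt c))" using ok c by auto
  fix e x assume e: "e \<notin> RE (rt c)" and x: "x \<in> {fst (ends e), snd (ends e)} \<inter> Vof ends (RE (rt c))"
  show "x \<in> Bd (rt c)"
  proof (cases "e \<in> RE (rt c')")
    case True
    then have "x \<in> Vof ends (RE (rt c'))" using x unfolding Vof_def by blast
    then show ?thesis using x c' bd by blast
  next
    case False
    then have "e \<notin> RE h" "x \<in> Vof ends (RE h)" using e x c'(1) unfolding Vof_def by blast+
    then have "x \<in> Bd h" using sep x by (auto simp: boundary_separates_def)
    then show ?thesis using x bd by blast
  qed
qed

lemma boundary_separates_subtree: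
  "sep_tree_ok ends RE Bd Sep a \<Longrightarrow> boundary_separates ends RE Bd a \<Longrightarrow> t \<in> set (subtrees a) \<Longrightarrow>
   boundary_separates ends RE Bd t"
proof (induction a)
  case (Nd h l r)
  then show ?case using boundary_separates_child[OF Nd.prems(1,2)] by auto
qed simp

lemma sum_matrix_vector_mult: "finite A \<Longrightarrow> (\<Sum>a\<in>A. f a) *v x = (\<Sum>a\<in>A. f a *v x)"
  by (induction A rule: finite_induct) (simp_all add: matrix_vector_mult_add_rdistrib)

lemma matrix_vector_mult_sum: "finite S \<Longrightarrow> A *v (\<Sum>a\<in>S. f a) = (\<Sum>a\<in>S. A *v f a)"
  by (induction S rule: finite_induct) (simp_all add: matrix_vector_right_distrib)

lemma vrestr_sum: "vrestr (\<Sum>a\<in>A. f a) S = (\<Sum>a\<in>A. vrestr (f a) S)"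
  by (cases "finite A") (auto simp: vec_eq_iff vrestr_def)

lemma sum_vrestr: "(\<Sum>i\<in>UNIV. vrestr u S $ i) = (\<Sum>x\<in>S. u $ x)"
  by (simp add: vrestr_def sum.If_cases)

lemma matrix_mul_diagm_right: "M ** diagm a = (\<chi> i j. M $ i $ j * a j)"
  by (simp add: vec_eq_iff matrix_matrix_mult_def diagm_def if_distrib if_distribR
      cong del: if_weak_cong)

lemma matrix_mul_diagm_left: "diagm a ** M = (\<chi> i j. a i * M $ i $ j)"
  by (simp add: vec_eq_iff matrix_matrix_mult_def diagm_def if_distrib if_distribR
      cong del: if_weak_cong)

lemma incid_leaf_laplacian:
  assumes "\<And>e. w e > 0"
  shows "(transpose (incid ends) ** diagm (\<lambda>e. sqrt (w e))) ** (diagm (\<lambda>e. sqrt (w e)) ** incid_on ends E)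
       = transpose (incid_on ends E) ** diagm w ** incid_on ends E"
proof -
  have entry: "incid ends $ e $ i * sqrt (w e) * (sqrt (w e) * incid_on ends E $ e $ j) =
      incid_on ends E $ e $ i * w e * incid_on ends E $ e $ j" for e i j
  proof -
    have "incid ends $ e $ i * sqrt (w e) * (sqrt (w e) * incid_on ends E $ e $ j) =
        incid ends $ e $ i * (sqrt (w e) * sqrt (w e)) * incid_on ends E $ e $ j"
      by (simp add: mult_ac)
    also have "\<dots> = incid_on ends E $ e $ i * w e * incid_on ends E $ e $ j"
      using assms[of e] by (simp add: abs_of_pos incid_on_def)
    finally show ?thesis .
  qed
  show ?thesis
    unfolding matrix_mul_diagm_right matrix_mul_diagm_left
    by (simp add: vec_eq_iff matrix_matrix_mult_def transpose_def entry)
qed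

lemma incid_sum:
  assumes "fst (ends e) \<noteq> snd (ends e)"
  shows "(\<Sum>x\<in>Z. incid ends $ e $ x) =
    (if fst (ends e) \<in> Z then 1 else 0) - (if snd (ends e) \<in> Z then 1 else 0)"
proof -
  have "(\<Sum>x\<in>Z. incid ends $ e $ x) =
      (\<Sum>x\<in>Z. (if x = fst (ends e) then 1 else 0) - (if x = snd (ends e) then 1 else 0))"
    by (rule sum.cong) (use assms in \<open>auto simp: incid_def\<close>)
  then show ?thesis by (simp add: sum_subtractf)
qed

locale separator_tree =
  fixes ends :: "'e::finite \<Rightarrow> 'v::finite \<times> 'v"
    and w :: "'e \<Rightarrow> real"
    and T :: "'n stree"
    and RE :: "'n \<Rightarrow> 'e set"
    and Bd Sep :: "'n \<Rightarrow> 'v set"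
    and SC :: "'n \<Rightarrow> real^'v^'v"
  assumes no_loops: "\<forall>e. fst (ends e) \<noteq> snd (ends e)"
    and wpos: "\<forall>e. w e > 0"
    and distinct_nodes: "distinct (map rt (subtrees T))"
    and root_edges: "RE (rt T) = UNIV"
    and root_bd: "Bd (rt T) = {}"
    and tree_ok: "sep_tree_ok ends RE Bd Sep T"
    and F_partition: "\<forall>x. \<exists>!t. t \<in> set (subtrees T) \<and> x \<in> Fset ends RE Bd Sep t"
    and SC_lap: "\<forall>t\<in>set (subtrees T). laplacian_on (Bd (rt t)) (SC (rt t))"
    and L_conn: "\<forall>t\<in>set (subtrees T).
                   connected_laplacian_on (Bd (rt t) \<union> Fset ends RE Bd Sep t) (Lap ends w RE SC t)"
begin

abbreviation "nodes \<equiv> set (subtrees T)"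
abbreviation "FH \<equiv> Fset ends RE Bd Sep"
abbreviation "LH \<equiv> Lap ends w RE SC"
abbreviation "XH \<equiv> Xop ends w RE Bd Sep SC"
abbreviation "PiPow \<equiv> PiProd ends w RE Bd Sep SC T"
abbreviation "BW \<equiv> transpose (incid ends) ** diagm (\<lambda>e. sqrt (w e))"

definition LFF :: "'n stree \<Rightarrow> real^'v^'v" where
  "LFF t = submat (LH t) (FH t) (FH t)"

lemma distinct_subtrees: "distinct (subtrees T)"
  using distinct_nodes distinct_map by blast

lemma sep_tree_ok_node: "t \<in> nodes \<Longrightarrow> sep_tree_ok ends RE Bd Sep t"
  using sep_tree_ok_subtree tree_ok by blast

lemma subtrees_nodes: "S0 \<in> nodes \<Longrightarrow> set (subtrees S0) \<subseteq> nodes"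
  using subtrees_trans by blast

lemma FH_disjoint: "s \<in> nodes \<Longrightarrow> t \<in> nodes \<Longrightarrow> x \<in> FH s \<Longrightarrow> x \<in> FH t \<Longrightarrow> s = t"
  using F_partition by blast

lemma FH_cover: "\<exists>t\<in>nodes. x \<in> FH t"
  using F_partition by blast

lemma LH_laplacian: "t \<in> nodes \<Longrightarrow> laplacian_on (Bd (rt t) \<union> FH t) (LH t)"
  using L_conn by (simp add: connected_laplacian_on_def)

lemma LH_symmetric: "t \<in> nodes \<Longrightarrow> transpose (LH t) = LH t"
  using LH_laplacian by (simp add: laplacian_on_def)

lemma LFF_symmetric: "t \<in> nodes \<Longrightarrow> transpose (LFF t) = LFF t"
  using LH_symmetric[of t] by (simp add: LFF_def submat_def transpose_def vec_eq_iff)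

lemma LFF_support: "LFF t $ i $ j \<noteq> 0 \<Longrightarrow> i \<in> FH t \<and> j \<in> FH t"
  by (simp add: LFF_def submat_def split: if_splits)

lemma pinv_LFF_vanishes_outside: "t \<in> nodes \<Longrightarrow> i \<notin> FH t \<Longrightarrow> (pinv (LFF t) *v u) $ i = 0"
  using pinv_vanishes_outside[OF LFF_symmetric LFF_support] by blast

lemma pinv_LFF_vrestr: "t \<in> nodes \<Longrightarrow> pinv (LFF t) *v vrestr u (FH t) = pinv (LFF t) *v u"
  using pinv_vrestr[OF LFF_symmetric LFF_support] by blast

lemma XH_eq: "XH t = submat (LH t) (Bd (rt t)) (FH t) ** pinv (LFF t)"
  by (simp add: Xop_def LFF_def)

lemma XH_vanishes_outside: "i \<notin> Bd (rt t) \<Longrightarrow> (XH t *v u) $ i = 0"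
  unfolding XH_eq matrix_vector_mul_assoc[symmetric]
  by (rule matrix_vector_mult_zero_row) (simp add: submat_def)

lemma XH_vrestr: "t \<in> nodes \<Longrightarrow> XH t *v vrestr u (FH t) = XH t *v u"
  by (simp add: XH_eq matrix_vector_mul_assoc[symmetric] pinv_LFF_vrestr)

lemma XH_empty_boundary:
  assumes "Bd (rt t) = {}"
  shows "XH t = 0"
proof -
  have "submat (LH t) (Bd (rt t)) (FH t) = 0" using assms by (simp add: submat_def vec_eq_iff)
  then show ?thesis by (simp add: XH_eq)
qed

lemma Bd_FH_height_less:
  assumes "t \<in> nodes" "t' \<in> nodes" "x \<in> Bd (rt t')" "x \<in> FH t"
  shows "height t' < height t"
proof -
  obtain s where "s \<in> nodes" "t' \<in> set (subtrees s)" "t' \<noteq> s" "x \<in> FH s"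
    using Bd_subset_ancestor_Fsets[OF tree_ok assms(2)] assms(3) root_bd by blast
  then show ?thesis using FH_disjoint assms subtrees_height by blast
qed

subsection \<open>Back substitution\<close>

lemma PiOp_mult:
  "PiOp ends w RE Bd Sep SC T k *v y = y - (\<Sum>t\<in>{t\<in>nodes. height t = k}. XH t *v y)"
proof -
  have "sum_list (map XH (filter (\<lambda>t. height t = k) (subtrees T))) =
      (\<Sum>t\<in>{t\<in>nodes. height t = k}. XH t)"
    using distinct_subtrees by (simp add: sum_list_distinct_conv_sum_set)
  then show ?thesis
    by (simp add: PiOp_def matrix_vector_mult_diff_rdistrib sum_matrix_vector_mult)
qed

lemma PiPow_stable:
  assumes "t \<in> nodes" "x \<in> FH t" "height t \<le> k"
  shows "PiPow k d $ x = PiPow (height t) d $ x"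
  using assms(3)
proof (induction k)
  case (Suc k)
  show ?case
  proof (cases "height t = Suc k")
    case False
    then have le: "height t \<le> k" using Suc.prems by simp
    have "(XH s *v PiPow k d) $ x = 0" if "s \<in> {s\<in>nodes. height s = k}" for s
      using XH_vanishes_outside Bd_FH_height_less[OF assms(1) _ _ assms(2)] that le by fastforce
    then show ?thesis using Suc.IH le by (simp add: PiOp_mult sum_component)
  qed simp
qed simp

lemma PiPow_expand:
  "PiPow k d = d - (\<Sum>t\<in>{t\<in>nodes. height t < k}. XH t *v PiPow (height t) d)"
proof (induction k)
  case (Suc k)
  have "{t\<in>nodes. height t < Suc k} = {t\<in>nodes. height t < k} \<union> {t\<in>nodes. height t = k}"
    by auto
  then have split: "(\<Sum>t\<in>{t\<in>nodes. height t < Suc k}. XH t *v PiPow (height t) d) =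
      (\<Sum>t\<in>{t\<in>nodes. height t < k}. XH t *v PiPow (height t) d) +
      (\<Sum>t\<in>{t\<in>nodes. height t = k}. XH t *v PiPow k d)"
    by (simp add: sum.union_disjoint disjoint_iff)
  have "PiPow (Suc k) d = PiPow k d - (\<Sum>t\<in>{t\<in>nodes. height t = k}. XH t *v PiPow k d)"
    by (simp add: PiOp_mult)
  also have "\<dots> = (d - (\<Sum>t\<in>{t\<in>nodes. height t < k}. XH t *v PiPow (height t) d))
      - (\<Sum>t\<in>{t\<in>nodes. height t = k}. XH t *v PiPow k d)"
    by (rule arg_cong[OF Suc.IH])
  finally show ?case by (simp only: split diff_diff_eq)
qed simp

lemma PiPow_triangular_system:
  "PiPow (height T) d + (\<Sum>t\<in>nodes. XH t *v PiPow (height T) d) = d"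
proof -
  let ?u = "PiPow (height T) d"
  have "XH t *v PiPow (height t) d = XH t *v ?u" if t: "t \<in> nodes" for t
  proof -
    have "vrestr (PiPow (height t) d) (FH t) = vrestr ?u (FH t)"
      using PiPow_stable[OF t _ subtrees_height_le[OF t]] by (simp add: vrestr_def vec_eq_iff)
    then show ?thesis by (metis XH_vrestr t)
  qed
  then have "(\<Sum>t\<in>{t\<in>nodes. height t < height T}. XH t *v PiPow (height t) d) =
      (\<Sum>t\<in>{t\<in>nodes. height t < height T}. XH t *v ?u)"
    by simp
  also have "\<dots> = (\<Sum>t\<in>nodes. XH t *v ?u)"
  proof (intro sum.mono_neutral_left ballI)
    fix t assume "t \<in> nodes - {t \<in> nodes. height t < height T}"
    then have "t = T" using subtrees_height by blast
    then show "XH t *v ?u = 0" using XH_empty_boundary root_bd by simp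
  qed auto
  finally show ?thesis using PiPow_expand[of "height T" d] by simp
qed

lemma LFF_kernel_orthogonal:
  assumes t: "t \<in> nodes" and k: "LFF t *v k = 0"
    and balanced: "Bd (rt t) = {} \<Longrightarrow> (\<Sum>x\<in>FH t. u $ x) = 0"
  shows "k \<bullet> vrestr u (FH t) = 0"
proof -
  define k' where "k' = vrestr k (FH t)"
  have "(LH t *v k') $ i = (LFF t *v k) $ i" if "i \<in> FH t" for i
    using that by (simp add: matrix_vector_mult_def LFF_def submat_def k'_def vrestr_def
        if_distrib if_distribR cong: if_cong)
  then have "k' \<bullet> (LH t *v k') = 0"
    using k by (auto simp: inner_vec_def k'_def vrestr_def intro!: sum.neutral)
  then have const: "k' $ a = k' $ b" if "a \<in> Bd (rt t) \<union> FH t" "b \<in> Bd (rt t) \<union> FH t" for a b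
    using connected_laplacian_on_kernel_const L_conn t that by blast
  have "k \<bullet> vrestr u (FH t) = (\<Sum>x\<in>FH t. k $ x * u $ x)"
    by (simp add: inner_vec_def vrestr_def if_distrib if_distribR sum.If_cases cong del: if_weak_cong)
  also have "\<dots> = 0"
  proof (cases "Bd (rt t) = {}")
    case False
    then obtain b where b: "b \<in> Bd (rt t)" by blast
    then have "k' $ b = 0" using Fset_Bd_disjoint[of ends RE Bd Sep t] by (auto simp: k'_def vrestr_def)
    then have "k $ x = 0" if "x \<in> FH t" for x
      using const[OF _ UnI1[OF b], of x] that by (simp add: k'_def vrestr_def)
    then show ?thesis by simp
  next
    case True
    show ?thesis
    proof (cases "FH t = {}")
      case False
      then obtain a where a: "a \<in> FH t" by blast
      then have "k $ x = k $ a" if "x \<in> FH t" for x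
        using const[of x a] that by (simp add: k'_def vrestr_def)
      then have "(\<Sum>x\<in>FH t. k $ x * u $ x) = k $ a * (\<Sum>x\<in>FH t. u $ x)"
        by (simp add: sum_distrib_left)
      then show ?thesis using balanced[OF True] by simp
    qed simp
  qed
  finally show ?thesis .
qed

lemma LH_split:
  assumes t: "t \<in> nodes" and y: "\<And>j. j \<notin> FH t \<Longrightarrow> y $ j = 0"
  shows "LH t *v y = submat (LH t) (Bd (rt t)) (FH t) *v y + LFF t *v y"
proof -
  have "LH t $ i $ j * y $ j =
      (if i \<in> Bd (rt t) \<and> j \<in> FH t then LH t $ i $ j else 0) * y $ j +
      (if i \<in> FH t \<and> j \<in> FH t then LH t $ i $ j else 0) * y $ j" for i j
    using y[of j] laplacian_on_support[OF LH_laplacian[OF t], of i j]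
      Fset_Bd_disjoint[of ends RE Bd Sep t] by auto
  then show ?thesis
    by (simp add: vec_eq_iff matrix_vector_mult_def submat_def LFF_def sum.distrib[symmetric])
qed

lemma LH_pinv_LFF:
  assumes t: "t \<in> nodes" and balanced: "Bd (rt t) = {} \<Longrightarrow> (\<Sum>x\<in>FH t. u $ x) = 0"
  shows "LH t *v (pinv (LFF t) *v u) = XH t *v u + vrestr u (FH t)"
proof -
  have "LFF t *v (pinv (LFF t) *v u) = LFF t *v (pinv (LFF t) *v vrestr u (FH t))"
    using pinv_LFF_vrestr[OF t] by simp
  also have "\<dots> = vrestr u (FH t)"
    using pinv_solves[OF LFF_symmetric[OF t]] LFF_kernel_orthogonal[OF t _ balanced] by blast
  finally show ?thesis
    using LH_split[OF t pinv_LFF_vanishes_outside[OF t]]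
    by (simp add: XH_eq matrix_vector_mul_assoc)
qed

lemma XH_sum_components:
  assumes t: "t \<in> nodes" and "Bd (rt t) \<noteq> {}"
  shows "(\<Sum>i\<in>UNIV. (XH t *v u) $ i) = - (\<Sum>x\<in>FH t. u $ x)"
  using laplacian_on_sum_mult[OF LH_laplacian[OF t], of "pinv (LFF t) *v u"]
    LH_pinv_LFF[OF t] assms(2)
  by (simp add: sum.distrib sum_vrestr eq_neg_iff_add_eq_0)

subsection \<open>Balance of \<open>u\<close> on nodes with empty boundary\<close>

abbreviation "F_below S0 \<equiv> \<Union>(FH ` set (subtrees S0))"

lemma ends_F_below_iff:
  assumes S0: "S0 \<in> nodes" "Bd (rt S0) = {}"
  shows "fst (ends e) \<in> F_below S0 \<longleftrightarrow> snd (ends e) \<in> F_below S0"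
proof (cases "e \<in> RE (rt S0)")
  case True
  then show ?thesis
    using Vof_subset_Bd_Fsets[OF sep_tree_ok_node[OF S0(1)]] S0(2) by (auto simp: Vof_def)
next
  case False
  have "x \<notin> F_below S0" if x: "x = fst (ends e) \<or> x = snd (ends e)" for x
  proof
    assume "x \<in> F_below S0"
    then obtain a where a: "a \<in> set (subtrees S0)" "x \<in> FH a" by blast
    then have aS: "a \<in> nodes" using subtrees_nodes[OF S0(1)] by blast
    have "boundary_separates ends RE Bd a"
      using boundary_separates_subtree[OF tree_ok _ aS] root_edges
      by (simp add: boundary_separates_def)
    moreover have "x \<in> Vof ends (RE (rt a))"
      using Fset_subset_Vof[OF sep_tree_ok_node[OF aS]] a(2) by blast
    ultimately have "e \<in> RE (rt a)"
      using x a(2) Fset_Bd_disjoint[of ends RE Bd Sep a] by (auto simp: boundary_separates_def)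
    then show False using RE_subtree[OF sep_tree_ok_node[OF S0(1)] a(1)] False by blast
  qed
  then show ?thesis by blast
qed

lemma divergence_sum_F_below:
  assumes "S0 \<in> nodes" "Bd (rt S0) = {}"
  shows "(\<Sum>x\<in>F_below S0. (BW *v v) $ x) = 0"
proof -
  have "(\<Sum>x\<in>F_below S0. (BW *v v) $ x) =
      (\<Sum>e\<in>UNIV. sqrt (w e) * v $ e * (\<Sum>x\<in>F_below S0. incid ends $ e $ x))"
    by (simp add: matrix_mul_diagm_right matrix_vector_mult_def transpose_def sum_distrib_left mult_ac)
      (rule sum.swap)
  also have "\<dots> = 0"
    using ends_F_below_iff[OF assms] no_loops by (intro sum.neutral) (simp add: incid_sum)
  finally show ?thesis .
qed

lemma XH_sum_F_below:
  assumes S0: "S0 \<in> nodes" "Bd (rt S0) = {}" and t: "t \<in> nodes"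
  shows "(\<Sum>x\<in>F_below S0. (XH t *v u) $ x) =
    (if t \<in> set (subtrees S0) \<and> Bd (rt t) \<noteq> {} then - (\<Sum>x\<in>FH t. u $ x) else 0)"
proof (cases "t \<in> set (subtrees S0)")
  case True
  show ?thesis
  proof (cases "Bd (rt t) = {}")
    case False
    have "Bd (rt t) \<subseteq> F_below S0"
      using Bd_subset_ancestor_Fsets[OF sep_tree_ok_node[OF S0(1)] True] S0(2) by blast
    then have "(\<Sum>x\<in>F_below S0. (XH t *v u) $ x) = (\<Sum>x\<in>UNIV. (XH t *v u) $ x)"
      using XH_vanishes_outside by (intro sum.mono_neutral_left) auto
    then show ?thesis using XH_sum_components[OF t False] True False by simp
  qed (simp add: XH_empty_boundary)
next
  case False
  have "(XH t *v u) $ x = 0" if "x \<in> F_below S0" for x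
  proof (rule XH_vanishes_outside, rule notI)
    assume "x \<in> Bd (rt t)"
    then obtain s where "s \<in> nodes" "t \<in> set (subtrees s)" "x \<in> FH s"
      using Bd_subset_ancestor_Fsets[OF tree_ok t] root_bd by blast
    then show False
      using that False FH_disjoint subtrees_nodes[OF S0(1)] subtrees_trans by blast
  qed
  then show ?thesis using False by simp
qed

lemma balanced_subtree_sum:
  assumes system: "u + (\<Sum>t\<in>nodes. XH t *v u) = BW *v v"
    and S0: "S0 \<in> nodes" "Bd (rt S0) = {}"
  shows "(\<Sum>a\<in>{a\<in>set (subtrees S0). Bd (rt a) = {}}. \<Sum>x\<in>FH a. u $ x) = 0"
proof -
  let ?D = "set (subtrees S0)"
  have "(\<Sum>x\<in>F_below S0. u $ x) = (\<Sum>a\<in>?D. \<Sum>x\<in>FH a. u $ x)"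
    using FH_disjoint subtrees_nodes[OF S0(1)] by (intro sum.UNION_disjoint) auto
  moreover have "(\<Sum>x\<in>F_below S0. (\<Sum>t\<in>nodes. XH t *v u) $ x) =
      (\<Sum>t\<in>nodes. if t \<in> ?D \<and> Bd (rt t) \<noteq> {} then - (\<Sum>x\<in>FH t. u $ x) else 0)"
    using XH_sum_F_below[OF S0] by (simp add: sum_component) (subst sum.swap, simp)
  moreover have "\<dots> = (\<Sum>t\<in>?D. if Bd (rt t) \<noteq> {} then - (\<Sum>x\<in>FH t. u $ x) else 0)"
    by (intro sum.mono_neutral_cong_right) (use subtrees_nodes[OF S0(1)] in auto)
  ultimately have "(\<Sum>a\<in>?D. (\<Sum>x\<in>FH a. u $ x) +
      (if Bd (rt a) \<noteq> {} then - (\<Sum>x\<in>FH a. u $ x) else 0)) = 0"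
    using arg_cong[OF system, of "\<lambda>y. \<Sum>x\<in>F_below S0. y $ x"] divergence_sum_F_below[OF S0]
    by (simp add: sum.distrib)
  moreover have "(\<Sum>a\<in>?D. (\<Sum>x\<in>FH a. u $ x) +
      (if Bd (rt a) \<noteq> {} then - (\<Sum>x\<in>FH a. u $ x) else 0)) =
      (\<Sum>a\<in>?D. if Bd (rt a) = {} then \<Sum>x\<in>FH a. u $ x else 0)"
    by (intro sum.cong) auto
  ultimately show ?thesis by (simp add: sum.inter_filter)
qed

lemma balanced_empty_boundary:
  assumes system: "u + (\<Sum>t\<in>nodes. XH t *v u) = BW *v v"
  shows "S0 \<in> nodes \<Longrightarrow> Bd (rt S0) = {} \<Longrightarrow> (\<Sum>x\<in>FH S0. u $ x) = 0"
proof (induction S0 rule: measure_induct_rule[of height])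
  case (less S0)
  let ?P = "{a\<in>set (subtrees S0). Bd (rt a) = {}}"
  have "(\<Sum>a\<in>?P - {S0}. \<Sum>x\<in>FH a. u $ x) = 0"
    using less subtrees_height subtrees_nodes by (intro sum.neutral) blast
  moreover have "S0 \<in> ?P" using less.prems subtrees_self by blast
  ultimately show ?case
    using balanced_subtree_sum[OF system less.prems] by (simp add: sum.remove)
qed

lemma LH_pinv_SC:
  assumes c: "c \<in> nodes"
  shows "LH c ** (pinv (LH c) ** SC (rt c)) = SC (rt c)"
proof (rule pinv_cancel_left[OF LH_symmetric[OF c]])
  have sl: "laplacian_on (Bd (rt c)) (SC (rt c))" using SC_lap c by blast
  then show "transpose (SC (rt c)) = SC (rt c)" by (simp add: laplacian_on_def)
  fix k assume "LH c *v k = 0"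
  then have "k \<bullet> (LH c *v k) = 0" by simp
  then have "k $ a = k $ b" if "a \<in> Bd (rt c)" "b \<in> Bd (rt c)" for a b
    using connected_laplacian_on_kernel_const L_conn c that by blast
  then show "SC (rt c) *v k = 0" by (rule laplacian_on_mult_const[OF sl])
qed

lemma BW_Mrec: "t \<in> nodes \<Longrightarrow> BW ** Mrec ends w RE SC t = LH t"
proof (induction t)
  case (Lf h)
  show ?case using wpos by (simp add: incid_leaf_laplacian)
next
  case (Nd h l r)
  have "l \<in> nodes" "r \<in> nodes" using subtrees_children[OF Nd.prems] by auto
  then show ?case
    using Nd.IH LH_pinv_SC by (simp add: matrix_add_ldistrib matrix_mul_assoc)
qed

lemma GammaT_vrestr:
  assumes t: "t \<in> nodes"
  shows "vrestr (GammaT ends w RE Bd Sep SC T *v u) (FH t) = pinv (LFF t) *v u"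
proof -
  have "vrestr (pinv (LFF s) *v u) (FH t) = (if s = t then pinv (LFF t) *v u else 0)"
    if s: "s \<in> nodes" for s
  proof (cases "s = t")
    case True
    then show ?thesis using pinv_LFF_vanishes_outside[OF t] by (auto simp: vec_eq_iff vrestr_def)
  next
    case False
    then show ?thesis
      using pinv_LFF_vanishes_outside[OF s] FH_disjoint[OF s t] by (fastforce simp: vec_eq_iff vrestr_def)
  qed
  moreover have "GammaT ends w RE Bd Sep SC T = (\<Sum>s\<in>nodes. pinv (LFF s))"
    unfolding GammaT_def LFF_def using distinct_subtrees by (simp add: sum_list_distinct_conv_sum_set)
  ultimately show ?thesis
    using t by (simp add: sum_matrix_vector_mult vrestr_sum)
qed

lemma sum_vrestr_FH: "(\<Sum>t\<in>nodes. vrestr u (FH t)) = u"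
proof (subst vec_eq_iff, intro allI)
  fix i
  obtain t0 where t0: "t0 \<in> nodes" "i \<in> FH t0" using FH_cover by blast
  have "vrestr u (FH t) $ i = (if t = t0 then u $ i else 0)" if t: "t \<in> nodes" for t
  proof (cases "t = t0")
    case True
    then show ?thesis using t0(2) by (simp add: vrestr_def)
  next
    case False
    then have "i \<notin> FH t" using FH_disjoint[OF t t0(1) _ t0(2)] by blast
    then show ?thesis using False by (simp add: vrestr_def)
  qed
  then show "(\<Sum>t\<in>nodes. vrestr u (FH t)) $ i = u $ i"
    using t0(1) by (simp add: sum_component)
qed

lemma flow_divergence:
  "let B = incid ends;
       Wh = diagm (\<lambda>e. sqrt (w e));
       d = transpose B ** Wh *v v;
       z = GammaT ends w RE Bd Sep SC T *v PiPow (height T) d;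
       f = sum_list (map (\<lambda>t. Mrec ends w RE SC t *v vrestr z (FH t)) (subtrees T))
   in transpose B ** Wh *v f = transpose B ** Wh *v v"
proof -
  define u where "u = PiPow (height T) (BW *v v)"
  define z where "z = GammaT ends w RE Bd Sep SC T *v u"
  have system: "u + (\<Sum>t\<in>nodes. XH t *v u) = BW *v v"
    unfolding u_def by (rule PiPow_triangular_system)
  have "BW *v sum_list (map (\<lambda>t. Mrec ends w RE SC t *v vrestr z (FH t)) (subtrees T))
      = (\<Sum>t\<in>nodes. (BW ** Mrec ends w RE SC t) *v vrestr z (FH t))"
    using distinct_subtrees
    by (simp add: sum_list_distinct_conv_sum_set matrix_vector_mult_sum matrix_vector_mul_assoc)
  also have "\<dots> = (\<Sum>t\<in>nodes. LH t *v (pinv (LFF t) *v u))"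
    by (simp add: BW_Mrec z_def GammaT_vrestr)
  also have "\<dots> = (\<Sum>t\<in>nodes. XH t *v u + vrestr u (FH t))"
    using LH_pinv_LFF balanced_empty_boundary[OF system] by simp
  also have "\<dots> = BW *v v"
    using system by (simp add: sum.distrib sum_vrestr_FH add.commute)
  finally show ?thesis by (simp add: Let_def u_def z_def)
qed

end

theorem mainTheorem13:
  fixes ends :: "'e::finite \<Rightarrow> 'v::finite \<times> 'v"
    and w :: "'e \<Rightarrow> real"
    and T :: "'n stree"
    and RE :: "'n \<Rightarrow> 'e set"
    and Bd Sep :: "'n \<Rightarrow> 'v set"
    and SC :: "'n \<Rightarrow> real^'v^'v"
    and v :: "real^'e"
  assumes no_loops: "\<forall>e. fst (ends e) \<noteq> snd (ends e)"
    and conn: "graph_connected ends"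
    and wpos: "\<forall>e. w e > 0"
    and distinct_nodes: "distinct (map rt (subtrees T))"
    and root_edges: "RE (rt T) = UNIV"
    and root_bd: "Bd (rt T) = {}"
    and tree_ok: "sep_tree_ok ends RE Bd Sep T"
    and F_partition: "\<forall>x. \<exists>!t. t \<in> set (subtrees T) \<and> x \<in> Fset ends RE Bd Sep t"
    and SC_lap: "\<forall>t\<in>set (subtrees T). laplacian_on (Bd (rt t)) (SC (rt t))"
    and L_conn: "\<forall>t\<in>set (subtrees T).
                   connected_laplacian_on (Bd (rt t) \<union> Fset ends RE Bd Sep t) (Lap ends w RE SC t)"
  shows
    "let B = incid ends;
         Wh = diagm (\<lambda>e. sqrt (w e));
         d = transpose B ** Wh *v v;
         z = GammaT ends w RE Bd Sep SC T *v PiProd ends w RE Bd Sep SC T (height T) d;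
         f = sum_list (map (\<lambda>t. Mrec ends w RE SC t *v vrestr z (Fset ends RE Bd Sep t)) (subtrees T))
     in transpose B ** Wh *v f = transpose B ** Wh *v v"
proof -
  interpret separator_tree ends w T RE Bd Sep SC
    using no_loops wpos distinct_nodes root_edges root_bd tree_ok F_partition SC_lap L_conn
    by unfold_locales
  show ?thesis by (rule flow_divergence)
qed

end
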